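(* Let $\epsilon>0$, $c_\epsilon=4/\epsilon$, weights $w_i>0$ with $\sum_{i=1}^Nw_i=1$, and $C_1,\dots,C_N$ symmetric positive semidefinite $n\times n$ matrices. Define $\mathcal G$ on symmetric positive semidefinite matrices by $\mathcal G(X)=\frac\epsilon4\sum_{i=1}^Nw_i\big[-I+(I+c_\epsilon^2X^{1/2}C_iX^{1/2})^{1/2}\big]$. (1) If there exists $\alpha>0$ with $C_i\ge\alpha I$ for all $i$ and $0<\epsilon<2\alpha$, then $\mathcal G$ has a strictly positive definite fixed point. (2) If $u\in\mathbb R^n$, $\|u\|=1$, and $0<\epsilon<2\sum_iw_i\langle u,C_iu\rangle$, then $X_u=x_u\,uu^T$ is a fixed point of $\mathcal G$, where $x_u$ is the unique positive solution of $x=\frac\epsilon4\sum_{i=1}^Nw_i\big[-1+(1+c_\epsilon^2x\langle u,C_iu\rangle)^{1/2}\big]$.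
   Context: For symmetric matrices, $A\ge B$ means $A-B$ is positive semidefinite; square roots are positive semidefinite square roots. *)

theory Defs
  imports "HOL-Analysis.Analysis"
begin

definition sym_mat :: "real^'n^'n \<Rightarrow> bool" where
  "sym_mat A \<longleftrightarrow> transpose A = A"

definition psd_mat :: "real^'n^'n \<Rightarrow> bool" where
  "psd_mat A \<longleftrightarrow> sym_mat A \<and> (\<forall>x. 0 \<le> x \<bullet> (A *v x))"

definition pd_mat :: "real^'n^'n \<Rightarrow> bool" where
  "pd_mat A \<longleftrightarrow> sym_mat A \<and> (\<forall>x. x \<noteq> 0 \<longrightarrow> 0 < x \<bullet> (A *v x))"

definition loewner_ge :: "real^'n^'n \<Rightarrow> real^'n^'n \<Rightarrow> bool" where
  "loewner_ge A B \<longleftrightarrow> psd_mat (A - B)"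

definition msqrt :: "real^'n^'n \<Rightarrow> real^'n^'n" where
  "msqrt X = (THE S. psd_mat S \<and> S ** S = X)"

definition outer :: "real^'n \<Rightarrow> real^'n \<Rightarrow> real^'n^'n" where
  "outer u v = (\<chi> i j. u $ i * v $ j)"

definition Gmap :: "real \<Rightarrow> nat \<Rightarrow> (nat \<Rightarrow> real) \<Rightarrow> (nat \<Rightarrow> real^'n^'n) \<Rightarrow> real^'n^'n \<Rightarrow> real^'n^'n" where
  "Gmap eps N w C X =
     (eps / 4) *\<^sub>R (\<Sum>i\<in>{1..N}. w i *\<^sub>R
        (- mat 1 + msqrt (mat 1 + ((4 / eps)^2) *\<^sub>R (msqrt X ** C i ** msqrt X))))"

definition gscal :: "real \<Rightarrow> nat \<Rightarrow> (nat \<Rightarrow> real) \<Rightarrow> (nat \<Rightarrow> real^'n^'n) \<Rightarrow> real^'n \<Rightarrow> real \<Rightarrow> real" where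
  "gscal eps N w C u x =
     (eps / 4) * (\<Sum>i\<in>{1..N}. w i * (- 1 + sqrt (1 + ((4 / eps)^2) * x * (u \<bullet> (C i *v u)))))"

end

theory Submission
  imports Defs
begin

text \<open>
  (1) Put \<open>\<beta> = \<alpha> - \<epsilon>/2\<close> and \<open>\<gamma> = \<beta> + K\<close> with \<open>C\<^sub>i \<le> K I\<close>. On the Loewner interval
  \<open>[\<beta> I, \<gamma> I]\<close>, congruence by \<open>X\<^sup>1\<^sup>/\<^sup>2\<close> and the matrix square root move the bounds of the
  quadratic form like their scalar counterparts, so \<open>\<G>\<close> maps the interval into
  \<open>[g\<^sub>\<alpha>(\<beta>) I, g\<^sub>K(\<gamma>) I]\<close> with \<open>g\<^sub>a(t) = \<epsilon>/4 (sqrt (1 + c\<^sup>2 a t) - 1)\<close>. Now \<open>\<beta>\<close> is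
  exactly the positive fixed point of \<open>g\<^sub>\<alpha>\<close> and \<open>g\<^sub>K(\<gamma>) \<le> \<gamma>\<close>, so the interval is invariant.
  It is compact and convex, and \<open>\<G>\<close> is continuous because the square root is
  H\<ouml>lder continuous of order 1/2; Brouwer's theorem yields a fixed point, positive definite
  as \<open>\<beta> > 0\<close>. The square root itself comes from the spectral theorem.

  (2) On rank-one matrices \<open>t u u\<^sup>T\<close> all square roots are explicit and
  \<open>\<G>(t u u\<^sup>T) = g(t) u u\<^sup>T\<close>. Writing \<open>g(x) = x q(x)\<close>, \<open>q\<close> decreases strictly from
  \<open>q(0) = 2/\<epsilon> \<Sum>\<^sub>i w\<^sub>i \<langle>u, C\<^sub>i u\<rangle> > 1\<close> to values \<open>\<le> 1\<close>, so \<open>g\<close> has exactly one positive fixed point.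
\<close>

lemma sym_mat_iff: "sym_mat A \<longleftrightarrow> (\<forall>i j. A$j$i = A$i$j)"
  by (auto simp: sym_mat_def transpose_def vec_eq_iff)

lemma sym_mat_mat: "sym_mat (mat k)"
  by (simp add: sym_mat_def)

lemma sym_mat_add: "sym_mat A \<Longrightarrow> sym_mat B \<Longrightarrow> sym_mat (A + B)"
  by (simp add: sym_mat_iff)

lemma sym_mat_diff: "sym_mat A \<Longrightarrow> sym_mat B \<Longrightarrow> sym_mat (A - B)"
  by (simp add: sym_mat_iff)

lemma sym_mat_uminus: "sym_mat A \<Longrightarrow> sym_mat (- A)"
  by (simp add: sym_mat_iff)

lemma sym_mat_scaleR: "sym_mat A \<Longrightarrow> sym_mat (c *\<^sub>R A)"
  by (simp add: sym_mat_iff)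

lemma sym_mat_sum: "(\<And>i. i \<in> I \<Longrightarrow> sym_mat (A i)) \<Longrightarrow> sym_mat (\<Sum>i\<in>I. A i)"
  by (simp add: sym_mat_iff sum_component)

lemma sym_mat_congruence: "sym_mat R \<Longrightarrow> sym_mat C \<Longrightarrow> sym_mat (R ** C ** R)"
  unfolding sym_mat_def by (simp add: matrix_transpose_mul matrix_mul_assoc)

lemma sym_mat_outer: "sym_mat (outer u u)"
  by (simp add: sym_mat_iff outer_def mult.commute)

lemma psd_mat_imp_sym_mat: "psd_mat A \<Longrightarrow> sym_mat A"
  by (simp add: psd_mat_def)

lemma sym_mat_inner_commute:
  assumes "sym_mat A" shows "x \<bullet> (A *v y) = (A *v x) \<bullet> y"
  by (metis assms dot_lmul_matrix sym_mat_def vector_transpose_matrix)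

lemma inner_sym_mat_square:
  assumes "sym_mat R" shows "x \<bullet> ((R ** R) *v x) = (R *v x) \<bullet> (R *v x)"
  using sym_mat_inner_commute[OF assms, of x "R *v x"] by (simp add: matrix_vector_mul_assoc)

lemma inner_sym_mat_congruence:
  assumes "sym_mat R" shows "x \<bullet> ((R ** C ** R) *v x) = (R *v x) \<bullet> (C *v (R *v x))"
  using sym_mat_inner_commute[OF assms, of x "C *v (R *v x)"]
  by (simp add: matrix_vector_mul_assoc matrix_mul_assoc)

lemma psd_mat_congruence:
  assumes "psd_mat C" "sym_mat R" shows "psd_mat (R ** C ** R)"
  using assms by (simp add: psd_mat_def sym_mat_congruence inner_sym_mat_congruence)

lemma psd_mat_mat_one_plus:
  assumes "psd_mat A" "0 \<le> c" shows "psd_mat (mat 1 + c *\<^sub>R A)"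
  using assms
  by (simp add: psd_mat_def sym_mat_add sym_mat_mat sym_mat_scaleR matrix_vector_mult_add_rdistrib
      inner_add_right flip: scaleR_matrix_vector_assoc)

lemma matrix_vector_mult_uminus_left: "(- A) *v x = - (A *v (x::real^'n))"
  by (simp add: matrix_vector_mult_def vec_eq_iff sum_negf)

lemma matrix_vector_mult_sum_left: "(\<Sum>i\<in>I. A i) *v x = (\<Sum>i\<in>I. A i *v x)"
  by (induction I rule: infinite_finite_induct) (auto simp: matrix_vector_mult_add_rdistrib)

lemma outer_matrix_vector_mult: "outer u v *v x = (v \<bullet> x) *\<^sub>R u"
  by (simp add: vec_eq_iff matrix_vector_mult_def outer_def inner_vec_def sum_distrib_left mult_ac)

lemma psd_mat_scaleR: "psd_mat A \<Longrightarrow> 0 \<le> c \<Longrightarrow> psd_mat (c *\<^sub>R A)"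
  by (simp add: psd_mat_def sym_mat_scaleR flip: scaleR_matrix_vector_assoc)

lemma psd_mat_outer: "psd_mat (outer u u)"
  by (simp add: psd_mat_def sym_mat_outer outer_matrix_vector_mult inner_commute)

lemma quadratic_form_normalize:
  fixes A :: "real^'n^'n"
  shows "(x /\<^sub>R norm x) \<bullet> (A *v (x /\<^sub>R norm x)) = (x \<bullet> (A *v x)) / (x \<bullet> x)"
  by (simp add: matrix_vector_mult_scaleR dot_square_norm power2_eq_square divide_inverse)

lemma linear_coeff_zero_if_quadratic_nonpos:
  fixes a b :: real
  assumes "\<And>t. a * t + b * t\<^sup>2 \<le> 0"
  shows "a = 0"
proof (rule ccontr)
  assume "a \<noteq> 0"
  define B where "B = \<bar>b\<bar> + 1"
  have "B > 0" and bB: "\<bar>b\<bar> = B - 1" by (simp_all add: B_def add_nonneg_pos)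
  have "0 < a\<^sup>2 / B\<^sup>2" using \<open>a \<noteq> 0\<close> \<open>B > 0\<close> by simp
  also have "a\<^sup>2 / B\<^sup>2 = a * (a / B) - \<bar>b\<bar> * (a / B)\<^sup>2"
    using \<open>B > 0\<close> by (simp add: bB field_simps power2_eq_square)
  also have "\<dots> \<le> a * (a / B) + b * (a / B)\<^sup>2"
    using mult_right_mono[OF abs_ge_minus_self[of b] zero_le_power2[of "a / B"]] by simp
  finally show False using assms[of "a / B"] by linarith
qed

section \<open>Spectral theorem\<close>

lemma rayleigh_max_exists:
  fixes A :: "real^'n^'n"
  assumes V: "subspace V" and ne: "V \<noteq> {0}"
  obtains v where "v \<in> V" "norm v = 1" "\<And>x. x \<in> V \<Longrightarrow> x \<bullet> (A *v x) \<le> (v \<bullet> (A *v v)) * (x \<bullet> x)"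
proof -
  let ?K = "V \<inter> sphere 0 1"
  obtain y where y: "y \<in> V" "y \<noteq> 0" using ne V subspace_0 by blast
  then have "y /\<^sub>R norm y \<in> ?K" using V by (simp add: subspace_mul)
  moreover have "continuous_on ?K (\<lambda>x. x \<bullet> (A *v x))"
    by (intro continuous_intros bounded_linear.continuous_on[OF matrix_vector_mul_bounded_linear])
  ultimately obtain v where v: "v \<in> ?K" and vmax: "\<And>z. z \<in> ?K \<Longrightarrow> z \<bullet> (A *v z) \<le> v \<bullet> (A *v v)"
    using continuous_attains_sup[OF closed_Int_compact[OF closed_subspace[OF V] compact_sphere]]
    by blast
  have "x \<bullet> (A *v x) \<le> (v \<bullet> (A *v v)) * (x \<bullet> x)" if "x \<in> V" for x
  proof (cases "x = 0")
    case False
    have "(x /\<^sub>R norm x) \<bullet> (A *v (x /\<^sub>R norm x)) \<le> v \<bullet> (A *v v)"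
      using that False V by (intro vmax) (simp add: subspace_mul)
    then show ?thesis
      using False by (simp only: quadratic_form_normalize) (simp add: divide_le_eq)
  qed simp
  moreover have "v \<in> V" "norm v = 1" using v by auto
  ultimately show thesis using that by blast
qed

text \<open>At a maximiser of the Rayleigh quotient the form \<open>l (x \<bullet> x) - x \<bullet> A x\<close> is positive
  semidefinite on \<open>V\<close> and vanishes at \<open>v\<close>, so its polar form vanishes at \<open>v\<close>: \<open>l v - A v \<perp> V\<close>.\<close>

lemma rayleigh_maximizer_eigenvector:
  fixes A :: "real^'n^'n"
  assumes sym: "sym_mat A" and V: "subspace V" and inv: "\<And>x. x \<in> V \<Longrightarrow> A *v x \<in> V"
    and v: "v \<in> V" "norm v = 1"
    and max: "\<And>x. x \<in> V \<Longrightarrow> x \<bullet> (A *v x) \<le> (v \<bullet> (A *v v)) * (x \<bullet> x)"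
  shows "A *v v = (v \<bullet> (A *v v)) *\<^sub>R v"
proof -
  define l where "l = v \<bullet> (A *v v)"
  define r where "r = A *v v - l *\<^sub>R v"
  have vv: "v \<bullet> v = 1" using v by (simp add: dot_square_norm)
  have rV: "r \<in> V" using v inv V by (simp add: r_def subspace_diff subspace_mul)
  have polar: "w \<bullet> r = 0" if w: "w \<in> V" for w
  proof -
    have "2 * (w \<bullet> r) = 0"
    proof (rule linear_coeff_zero_if_quadratic_nonpos)
      fix t :: real
      have "v + t *\<^sub>R w \<in> V" using v w V by (simp add: subspace_add subspace_mul)
      note max[OF this]
      moreover have "(v + t *\<^sub>R w) \<bullet> (A *v (v + t *\<^sub>R w))
          = l + 2 * t * (w \<bullet> (A *v v)) + t\<^sup>2 * (w \<bullet> (A *v w))"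
        using sym_mat_inner_commute[OF sym, of v w]
        by (simp add: l_def matrix_vector_right_distrib matrix_vector_mult_scaleR inner_add_left
            inner_add_right inner_commute power2_eq_square algebra_simps)
      moreover have "(v + t *\<^sub>R w) \<bullet> (v + t *\<^sub>R w) = 1 + 2 * t * (w \<bullet> v) + t\<^sup>2 * (w \<bullet> w)"
        using vv by (simp add: inner_add_left inner_add_right inner_commute power2_eq_square)
      ultimately have "l + 2 * t * (w \<bullet> (A *v v)) + t\<^sup>2 * (w \<bullet> (A *v w))
          \<le> l * (1 + 2 * t * (w \<bullet> v) + t\<^sup>2 * (w \<bullet> w))"
        by (simp only: l_def)
      then show "2 * (w \<bullet> r) * t + (w \<bullet> (A *v w) - l * (w \<bullet> w)) * t\<^sup>2 \<le> 0"
        by (simp add: r_def inner_diff_right algebra_simps)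
    qed
    then show ?thesis by simp
  qed
  have "r = 0" using polar[OF rV] by simp
  then show ?thesis by (simp add: r_def l_def)
qed

lemma sym_mat_max_eigenvector:
  fixes A :: "real^'n^'n"
  assumes "sym_mat A"
  obtains v where "norm v = 1" "A *v v = (v \<bullet> (A *v v)) *\<^sub>R v"
    "\<And>x. x \<bullet> (A *v x) \<le> (v \<bullet> (A *v v)) * (x \<bullet> x)"
proof -
  have nontrivial: "(UNIV :: (real^'n) set) \<noteq> {0}"
    by blast
  obtain v where v: "norm v = 1"
    and max: "\<And>x. x \<bullet> (A *v x) \<le> (v \<bullet> (A *v v)) * (x \<bullet> x)"
    by (rule rayleigh_max_exists[OF subspace_UNIV nontrivial]) auto
  have "A *v v = (v \<bullet> (A *v v)) *\<^sub>R v"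
    by (rule rayleigh_maximizer_eigenvector[OF assms subspace_UNIV]) (use v max in auto)
  from v this max show thesis by (rule that)
qed

lemma unit_eigenvalue_square:
  fixes S :: "real^'n^'n"
  assumes "sym_mat S" "norm v = 1" "S *v v = \<mu> *\<^sub>R v"
  shows "v \<bullet> ((S ** S) *v v) = \<mu>\<^sup>2"
  using assms by (simp add: inner_sym_mat_square dot_square_norm power2_eq_square)

lemma sym_mat_eigenbasis_subspace:
  fixes A :: "real^'n^'n"
  assumes sym: "sym_mat A"
  shows "subspace V \<Longrightarrow> (\<And>x. x \<in> V \<Longrightarrow> A *v x \<in> V) \<Longrightarrow>
    \<exists>B. pairwise orthogonal B \<and> (\<forall>b\<in>B. norm b = 1) \<and> span B = V
      \<and> (\<forall>b\<in>B. A *v b = (b \<bullet> (A *v b)) *\<^sub>R b)"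
proof (induction "dim V" arbitrary: V rule: less_induct)
  case less
  show ?case
  proof (cases "V = {0}")
    case True then show ?thesis by (intro exI[of _ "{}"]) auto
  next
    case False
    obtain v where vV: "v \<in> V" and nv: "norm v = 1"
      and max: "\<And>x. x \<in> V \<Longrightarrow> x \<bullet> (A *v x) \<le> (v \<bullet> (A *v v)) * (x \<bullet> x)"
      using rayleigh_max_exists[OF less.prems(1) False] by blast
    have ev: "A *v v = (v \<bullet> (A *v v)) *\<^sub>R v"
      using rayleigh_maximizer_eigenvector[OF sym less.prems vV nv max] .
    define V' where "V' = {x\<in>V. orthogonal v x}"
    have sV': "subspace V'"
      using less.prems(1) by (auto simp: V'_def subspace_def orthogonal_clauses)
    have invV': "A *v x \<in> V'" if x: "x \<in> V'" for x
    proof -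
      have "v \<bullet> (A *v x) = (A *v v) \<bullet> x" by (rule sym_mat_inner_commute[OF sym])
      also have "\<dots> = 0" using x by (subst ev) (simp add: V'_def orthogonal_def)
      finally show ?thesis using x less.prems(2) by (simp add: V'_def orthogonal_def)
    qed
    have vv: "v \<bullet> v = 1" using nv by (simp add: dot_square_norm)
    have "v \<notin> V'" using vv by (simp add: V'_def orthogonal_def)
    then have "V' \<subset> V" using vV by (auto simp: V'_def)
    moreover have "span V' = V'" "span V = V"
      using sV' less.prems(1) by (simp_all add: span_eq_iff)
    ultimately have "dim V' < dim V"
      by (metis dim_psubset)
    then obtain B' where B': "pairwise orthogonal B'" "\<forall>b\<in>B'. norm b = 1" "span B' = V'"
        "\<forall>b\<in>B'. A *v b = (b \<bullet> (A *v b)) *\<^sub>R b"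
      using less.hyps sV' invV' by blast
    have "B' \<subseteq> V'" using B'(3) span_superset by blast
    have "span (insert v B') = V"
    proof
      show "span (insert v B') \<subseteq> V"
        using less.prems(1) vV \<open>B' \<subseteq> V'\<close> by (intro span_minimal) (auto simp: V'_def)
      show "V \<subseteq> span (insert v B')"
      proof
        fix x assume x: "x \<in> V"
        have "x - (v \<bullet> x) *\<^sub>R v \<in> V'" using x vV vv less.prems(1)
          by (simp add: V'_def orthogonal_def subspace_diff subspace_mul inner_diff_right)
        then have "x - (v \<bullet> x) *\<^sub>R v \<in> span (insert v B')" using B'(3) span_mono[of B'] by auto
        moreover have "(v \<bullet> x) *\<^sub>R v \<in> span (insert v B')" by (intro span_mul span_base) simp
        ultimately show "x \<in> span (insert v B')" using span_add by fastforce
      qed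
    qed
    moreover have "pairwise orthogonal (insert v B')"
      unfolding pairwise_insert using B'(1) \<open>B' \<subseteq> V'\<close> orthogonal_commute
      by (auto simp: V'_def)
    moreover have "\<forall>b\<in>insert v B'. norm b = 1" "\<forall>b\<in>insert v B'. A *v b = (b \<bullet> (A *v b)) *\<^sub>R b"
      using B'(2,4) nv ev by auto
    ultimately show ?thesis by blast
  qed
qed

lemma sym_mat_eigenbasis:
  fixes A :: "real^'n^'n"
  assumes "sym_mat A"
  obtains B where "pairwise orthogonal B" "\<And>b. b \<in> B \<Longrightarrow> norm b = 1" "span B = UNIV"
    "\<And>b. b \<in> B \<Longrightarrow> A *v b = (b \<bullet> (A *v b)) *\<^sub>R b"
  using sym_mat_eigenbasis_subspace[OF assms subspace_UNIV] by blast

section \<open>The positive semidefinite square root\<close>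

lemma psd_mat_square_root_exists:
  fixes A :: "real^'n^'n"
  assumes psd: "psd_mat A"
  obtains S where "psd_mat S" "S ** S = A"
proof -
  obtain B where orth: "pairwise orthogonal B" and unit: "\<And>b. b \<in> B \<Longrightarrow> norm b = 1"
    and span: "span B = UNIV" and eig: "\<And>b. b \<in> B \<Longrightarrow> A *v b = (b \<bullet> (A *v b)) *\<^sub>R b"
    using sym_mat_eigenbasis[OF psd_mat_imp_sym_mat[OF psd]] by blast
  have fin: "finite B" using pairwise_orthogonal_imp_finite[OF orth] .
  define l where "l b = b \<bullet> (A *v b)" for b
  have l_nonneg: "0 \<le> l b" for b using psd by (simp add: psd_mat_def l_def)
  define S where "S = (\<Sum>b\<in>B. sqrt (l b) *\<^sub>R outer b b)"
  have Sx: "S *v x = (\<Sum>b\<in>B. (sqrt (l b) * (b \<bullet> x)) *\<^sub>R b)" for x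
    by (simp add: S_def matrix_vector_mult_sum_left outer_matrix_vector_mult
        flip: scaleR_matrix_vector_assoc)
  have Sc: "S *v c = sqrt (l c) *\<^sub>R c" if c: "c \<in> B" for c
  proof -
    have "S *v c = (\<Sum>b\<in>B. if b = c then sqrt (l c) *\<^sub>R c else 0)"
      unfolding Sx using orth unit c
      by (intro sum.cong) (auto simp: pairwise_def orthogonal_def dot_square_norm)
    then show ?thesis using fin c by simp
  qed
  have "psd_mat S"
    unfolding psd_mat_def
  proof (intro conjI allI)
    show "sym_mat S" unfolding S_def by (intro sym_mat_sum sym_mat_scaleR sym_mat_outer)
    fix x
    have "x \<bullet> (S *v x) = (\<Sum>b\<in>B. sqrt (l b) * (b \<bullet> x)\<^sup>2)"
      by (simp add: Sx inner_sum_right inner_commute power2_eq_square mult.assoc)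
    also have "\<dots> \<ge> 0" using l_nonneg by (intro sum_nonneg) simp
    finally show "0 \<le> x \<bullet> (S *v x)" .
  qed
  moreover have "(S ** S) *v x = A *v x" for x
  proof (rule linear_eq_on_span[OF matrix_vector_mul_linear matrix_vector_mul_linear])
    fix b assume b: "b \<in> B"
    have "(S ** S) *v b = (sqrt (l b) * sqrt (l b)) *\<^sub>R b"
      by (simp add: Sc[OF b] matrix_vector_mult_scaleR flip: matrix_vector_mul_assoc)
    also have "\<dots> = A *v b" using eig[OF b] l_nonneg[of b] by (simp add: l_def)
    finally show "(S ** S) *v b = A *v b" .
  qed (simp add: span)
  then have "S ** S = A" by (simp add: matrix_eq)
  ultimately show thesis by (rule that)
qed

lemma psd_mat_square_eigenvector:
  fixes T :: "real^'n^'n"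
  assumes T: "psd_mat T" and \<mu>: "0 \<le> \<mu>" and TT: "T *v (T *v b) = (\<mu> * \<mu>) *\<^sub>R b"
  shows "T *v b = \<mu> *\<^sub>R b"
proof (cases "\<mu> = 0")
  case True
  have "(T *v b) \<bullet> (T *v b) = b \<bullet> (T *v (T *v b))"
    using sym_mat_inner_commute[OF psd_mat_imp_sym_mat[OF T], of b "T *v b"] by simp
  then show ?thesis using TT True by simp
next
  case False
  define y where "y = T *v b - \<mu> *\<^sub>R b"
  have "T *v y = - \<mu> *\<^sub>R y"
    by (simp add: y_def TT matrix_vector_mult_diff_distrib matrix_vector_mult_scaleR algebra_simps)
  then have "y \<bullet> (T *v y) = - \<mu> * (y \<bullet> y)" by simp
  moreover have "0 \<le> y \<bullet> (T *v y)" using T by (simp add: psd_mat_def)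
  ultimately have "\<mu> * (y \<bullet> y) \<le> 0" by simp
  then have "y \<bullet> y \<le> 0" using \<mu> False by (simp add: mult_le_0_iff)
  then have "y \<bullet> y = 0" using inner_ge_zero[of y] by linarith
  then show ?thesis by (simp add: y_def)
qed

lemma psd_mat_square_root_unique:
  fixes S T :: "real^'n^'n"
  assumes S: "psd_mat S" and T: "psd_mat T" and eq: "S ** S = T ** T"
  shows "S = T"
proof -
  obtain B where span: "span B = UNIV" and eig: "\<And>b. b \<in> B \<Longrightarrow> S *v b = (b \<bullet> (S *v b)) *\<^sub>R b"
    using sym_mat_eigenbasis[OF psd_mat_imp_sym_mat[OF S]] by metis
  have "S *v x = T *v x" for x
  proof (rule linear_eq_on_span[OF matrix_vector_mul_linear matrix_vector_mul_linear])
    fix b assume b: "b \<in> B"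
    define \<mu> where "\<mu> = b \<bullet> (S *v b)"
    have "0 \<le> \<mu>" using S by (simp add: psd_mat_def \<mu>_def)
    have Sb: "S *v b = \<mu> *\<^sub>R b" using eig[OF b] by (simp add: \<mu>_def)
    have "T *v (T *v b) = S *v (S *v b)" by (simp add: matrix_vector_mul_assoc eq)
    also have "\<dots> = (\<mu> * \<mu>) *\<^sub>R b" by (simp add: Sb matrix_vector_mult_scaleR)
    finally have "T *v b = \<mu> *\<^sub>R b" by (rule psd_mat_square_eigenvector[OF T \<open>0 \<le> \<mu>\<close>])
    then show "S *v b = T *v b" by (simp add: Sb)
  qed (simp add: span)
  then show ?thesis by (simp add: matrix_eq)
qed

lemma msqrt_unique:
  assumes "psd_mat S" "S ** S = A"
  shows "msqrt A = S"
  unfolding msqrt_def using assms psd_mat_square_root_unique by (intro the_equality) auto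

lemma psd_mat_msqrt_square:
  assumes "psd_mat A" shows "psd_mat (msqrt A)" "msqrt A ** msqrt A = A"
proof -
  obtain S where S: "psd_mat S" "S ** S = A" using psd_mat_square_root_exists[OF assms] .
  then have "msqrt A = S" by (rule msqrt_unique)
  with S show "psd_mat (msqrt A)" "msqrt A ** msqrt A = A" by simp_all
qed

lemmas psd_mat_msqrt = psd_mat_msqrt_square(1) and msqrt_square = psd_mat_msqrt_square(2)

lemma sym_mat_msqrt: "psd_mat A \<Longrightarrow> sym_mat (msqrt A)"
  by (simp add: psd_mat_imp_sym_mat psd_mat_msqrt)

section \<open>H\<ouml>lder continuity of the square root\<close>

lemma quadratic_form_abs_le_onorm:
  fixes M :: "real^'n^'n"
  shows "\<bar>x \<bullet> (M *v x)\<bar> \<le> onorm ((*v) M) * (norm x)\<^sup>2"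
proof -
  have "\<bar>x \<bullet> (M *v x)\<bar> \<le> norm x * norm (M *v x)" by (rule Cauchy_Schwarz_ineq2)
  also have "\<dots> \<le> norm x * (onorm ((*v) M) * norm x)"
    by (intro mult_left_mono onorm[OF matrix_vector_mul_bounded_linear]) simp
  finally show ?thesis by (simp add: power2_eq_square mult_ac)
qed

lemma onorm_matrix_le_norm:
  fixes M :: "real^'n^'m"
  shows "onorm ((*v) M) \<le> real CARD('m) * real CARD('n) * norm M"
  by (rule onorm_le_matrix_component)
    (rule order_trans[OF component_le_norm_cart Finite_Cartesian_Product.norm_nth_le])

lemma norm_matrix_le_entry_bound:
  fixes M :: "real^'n^'m"
  assumes "\<And>i j. \<bar>M$i$j\<bar> \<le> K"
  shows "norm M \<le> real CARD('m) * real CARD('n) * K"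
proof -
  have "norm M \<le> (\<Sum>i\<in>UNIV. norm (M$i))" by (simp add: norm_vec_def L2_set_le_sum)
  also have "\<dots> \<le> (\<Sum>i\<in>UNIV. \<Sum>j\<in>UNIV. \<bar>M$i$j\<bar>)" by (intro sum_mono norm_le_l1_cart)
  also have "\<dots> \<le> (\<Sum>i\<in>(UNIV::'m set). \<Sum>j\<in>(UNIV::'n set). K)" by (intro sum_mono assms)
  finally show ?thesis by simp
qed

text \<open>Polarization: \<open>4 D\<^sub>i\<^sub>j\<close> is the difference of the forms at \<open>e\<^sub>i + e\<^sub>j\<close> and \<open>e\<^sub>i - e\<^sub>j\<close>.\<close>

lemma sym_mat_entry_le_form_bound:
  fixes D :: "real^'n^'n"
  assumes sym: "sym_mat D" and form: "\<And>x. \<bar>x \<bullet> (D *v x)\<bar> \<le> s * (norm x)\<^sup>2"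
  shows "\<bar>D$i$j\<bar> \<le> 2 * s"
proof -
  let ?ei = "axis i (1::real)" and ?ej = "axis j (1::real)"
  have Dij: "?ei \<bullet> (D *v ?ej) = D$i$j"
    by (simp add: inner_axis' matrix_vector_mult_basis column_def)
  have Dji: "?ej \<bullet> (D *v ?ei) = D$i$j"
    using sym_mat_inner_commute[OF sym, of ?ej ?ei] Dij by (simp add: inner_commute)
  have polar: "(?ei + ?ej) \<bullet> (D *v (?ei + ?ej)) - (?ei - ?ej) \<bullet> (D *v (?ei - ?ej)) = 4 * D$i$j"
    by (simp add: matrix_vector_right_distrib matrix_vector_mult_diff_distrib inner_add_left
        inner_add_right inner_diff_left inner_diff_right Dij Dji)
  have "\<bar>?ei \<bullet> (D *v ?ei)\<bar> \<le> s" using form[of ?ei] by simp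
  then have "s \<ge> 0" by linarith
  moreover have "norm (?ei + ?ej) \<le> 2" "norm (?ei - ?ej) \<le> 2"
    using norm_triangle_ineq[of ?ei ?ej] norm_triangle_ineq4[of ?ei ?ej] by simp_all
  then have "(norm (?ei + ?ej))\<^sup>2 \<le> 2\<^sup>2" "(norm (?ei - ?ej))\<^sup>2 \<le> 2\<^sup>2"
    by (simp_all only: power_mono norm_ge_zero)
  ultimately have "s * (norm (?ei + ?ej))\<^sup>2 \<le> s * 4" "s * (norm (?ei - ?ej))\<^sup>2 \<le> s * 4"
    by (simp_all add: mult_left_mono)
  then have "\<bar>(?ei + ?ej) \<bullet> (D *v (?ei + ?ej))\<bar> \<le> 4 * s"
    "\<bar>(?ei - ?ej) \<bullet> (D *v (?ei - ?ej))\<bar> \<le> 4 * s"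
    using form[of "?ei + ?ej"] form[of "?ei - ?ej"] by linarith+
  then show ?thesis using polar by linarith
qed

text \<open>If \<open>v\<close> is a unit eigenvector of \<open>\<surd>A - \<surd>B\<close> with eigenvalue \<open>m > 0\<close>, then
  \<open>v \<bullet> (A - B) v = 2 m (v \<bullet> \<surd>B v) + m\<^sup>2 \<ge> m\<^sup>2\<close>.\<close>

lemma msqrt_diff_form_le:
  fixes A B :: "real^'n^'n"
  assumes A: "psd_mat A" and B: "psd_mat B"
  shows "x \<bullet> ((msqrt A - msqrt B) *v x) \<le> sqrt (onorm ((*v) (A - B))) * (x \<bullet> x)"
proof -
  define S T where "S = msqrt A" and "T = msqrt B"
  have symST: "sym_mat S" "sym_mat T" using A B by (simp_all add: S_def T_def sym_mat_msqrt)
  obtain v where v: "norm v = 1" and ev: "(S - T) *v v = (v \<bullet> ((S - T) *v v)) *\<^sub>R v"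
    and max: "\<And>x. x \<bullet> ((S - T) *v x) \<le> (v \<bullet> ((S - T) *v v)) * (x \<bullet> x)"
    using sym_mat_max_eigenvector[OF sym_mat_diff[OF symST]] by blast
  define m where "m = v \<bullet> ((S - T) *v v)"
  have "m \<le> sqrt (onorm ((*v) (A - B)))"
  proof (cases "m \<le> 0")
    case True then show ?thesis using onorm_pos_le[OF matrix_vector_mul_bounded_linear]
      by (meson order_trans real_sqrt_ge_zero)
  next
    case False
    have vv: "v \<bullet> v = 1" using v by (simp add: dot_square_norm)
    have Sv: "S *v v = T *v v + m *\<^sub>R v"
      using ev by (simp add: m_def matrix_vector_mult_diff_rdistrib algebra_simps)
    have "0 \<le> v \<bullet> (T *v v)" using psd_mat_msqrt[OF B] unfolding T_def psd_mat_def by blast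
    then have "m\<^sup>2 \<le> 2 * m * (v \<bullet> (T *v v)) + m\<^sup>2" using False by simp
    also have "\<dots> = (S *v v) \<bullet> (S *v v) - (T *v v) \<bullet> (T *v v)"
      using vv by (simp add: Sv inner_add_left inner_add_right inner_commute power2_eq_square
          algebra_simps)
    also have "\<dots> = v \<bullet> ((A - B) *v v)"
      using inner_sym_mat_square[OF symST(1), of v] inner_sym_mat_square[OF symST(2), of v]
        msqrt_square[OF A] msqrt_square[OF B]
      by (simp add: S_def T_def matrix_vector_mult_diff_rdistrib inner_diff_right)
    also have "\<dots> \<le> onorm ((*v) (A - B))"
      using quadratic_form_abs_le_onorm[of v "A - B"] v by simp
    finally show ?thesis using False by (simp add: real_le_rsqrt)
  qed
  then have "m * (x \<bullet> x) \<le> sqrt (onorm ((*v) (A - B))) * (x \<bullet> x)"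
    by (simp add: mult_right_mono)
  with max[of x] show ?thesis by (simp add: S_def T_def m_def)
qed

lemma msqrt_diff_form_abs_le:
  fixes A B :: "real^'n^'n"
  assumes A: "psd_mat A" and B: "psd_mat B"
  shows "\<bar>x \<bullet> ((msqrt A - msqrt B) *v x)\<bar> \<le> sqrt (onorm ((*v) (A - B))) * (norm x)\<^sup>2"
proof -
  have "(*v) (B - A) = (\<lambda>y. - ((A - B) *v y))"
    by (simp add: fun_eq_iff matrix_vector_mult_diff_rdistrib)
  then have "onorm ((*v) (B - A)) = onorm ((*v) (A - B))"
    by (simp add: onorm_neg)
  then have "- (x \<bullet> ((msqrt A - msqrt B) *v x)) \<le> sqrt (onorm ((*v) (A - B))) * (x \<bullet> x)"
    using msqrt_diff_form_le[OF B A, of x]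
    by (simp add: matrix_vector_mult_diff_rdistrib inner_diff_right)
  with msqrt_diff_form_le[OF A B, of x] show ?thesis by (simp add: dot_square_norm abs_le_iff)
qed

lemma msqrt_diff_norm_le:
  fixes A B :: "real^'n^'n"
  assumes A: "psd_mat A" and B: "psd_mat B"
  shows "norm (msqrt A - msqrt B) \<le> 2 * real CARD('n) ^ 3 * sqrt (norm (A - B))"
proof -
  have "sym_mat (msqrt A - msqrt B)" using A B by (simp add: sym_mat_diff sym_mat_msqrt)
  then have "\<bar>(msqrt A - msqrt B)$i$j\<bar> \<le> 2 * sqrt (onorm ((*v) (A - B)))" for i j
    by (rule sym_mat_entry_le_form_bound[OF _ msqrt_diff_form_abs_le[OF A B]])
  also have "\<dots> \<le> 2 * sqrt (real CARD('n) * real CARD('n) * norm (A - B))"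
    using onorm_matrix_le_norm[of "A - B"] by simp
  also have "\<dots> = 2 * real CARD('n) * sqrt (norm (A - B))"
    by (simp add: real_sqrt_mult)
  finally have "norm (msqrt A - msqrt B)
      \<le> real CARD('n) * real CARD('n) * (2 * real CARD('n) * sqrt (norm (A - B)))"
    by (rule norm_matrix_le_entry_bound)
  then show ?thesis by (simp add: power3_eq_cube mult_ac)
qed

lemma continuous_on_sqrt_dist_bound:
  assumes "\<And>x y. x \<in> S \<Longrightarrow> y \<in> S \<Longrightarrow> dist (f x) (f y) \<le> c * sqrt (dist x y)"
  shows "continuous_on S f"
  unfolding continuous_on_iff
proof (intro ballI allI impI)
  fix x e assume x: "x \<in> S" and e: "(0::real) < e"
  show "\<exists>d>0. \<forall>y\<in>S. dist y x < d \<longrightarrow> dist (f y) (f x) < e"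
  proof (intro exI[of _ "(e / (\<bar>c\<bar> + 1))\<^sup>2"] conjI ballI impI)
    show "0 < (e / (\<bar>c\<bar> + 1))\<^sup>2" using e by simp
    fix y assume y: "y \<in> S" and "dist y x < (e / (\<bar>c\<bar> + 1))\<^sup>2"
    then have "sqrt (dist y x) < e / (\<bar>c\<bar> + 1)"
      using e by (simp add: real_sqrt_less_iff real_less_lsqrt)
    then have "(\<bar>c\<bar> + 1) * sqrt (dist y x) < e" by (simp add: field_simps add_nonneg_pos)
    moreover have "c * sqrt (dist y x) \<le> (\<bar>c\<bar> + 1) * sqrt (dist y x)"
      by (intro mult_right_mono) auto
    ultimately show "dist (f y) (f x) < e" using assms[OF y x] by linarith
  qed
qed

lemma continuous_on_msqrt: "continuous_on {A :: real^'n^'n. psd_mat A} msqrt"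
  by (rule continuous_on_sqrt_dist_bound[where c = "2 * real CARD('n) ^ 3"])
    (simp add: dist_norm msqrt_diff_norm_le)

definition loewner_interval :: "real \<Rightarrow> real \<Rightarrow> (real^'n^'n) set" where
  "loewner_interval a b = {X. loewner_ge X (a *\<^sub>R mat 1) \<and> loewner_ge (b *\<^sub>R mat 1) X}"

lemma scaleR_mat_one_matrix_vector_mult [simp]: "(c *\<^sub>R mat 1) *v x = c *\<^sub>R (x :: real^'n)"
  by (simp flip: scaleR_matrix_vector_assoc)

lemma sym_mat_shift_iff:
  fixes X :: "real^'n^'n"
  shows "sym_mat (X - c *\<^sub>R mat 1) \<longleftrightarrow> sym_mat X" "sym_mat (c *\<^sub>R mat 1 - X) \<longleftrightarrow> sym_mat X"
proof -
  have I: "sym_mat (c *\<^sub>R mat 1 :: real^'n^'n)" by (intro sym_mat_scaleR sym_mat_mat)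
  show "sym_mat (X - c *\<^sub>R mat 1) \<longleftrightarrow> sym_mat X"
    using sym_mat_add[OF _ I, of "X - c *\<^sub>R mat 1"] sym_mat_diff[OF _ I, of X]
    by (simp only: diff_add_cancel) blast
  show "sym_mat (c *\<^sub>R mat 1 - X) \<longleftrightarrow> sym_mat X"
    using sym_mat_diff[OF I, of "c *\<^sub>R mat 1 - X"] sym_mat_diff[OF I, of X]
    by (simp only: diff_diff_eq2 add_diff_cancel_left') blast
qed

lemma loewner_ge_scaleR_mat_one_iff:
  "loewner_ge X (a *\<^sub>R mat 1) \<longleftrightarrow> sym_mat X \<and> (\<forall>x. a * (x \<bullet> x) \<le> x \<bullet> (X *v x))"
  by (simp add: loewner_ge_def psd_mat_def sym_mat_shift_iff matrix_vector_mult_diff_rdistrib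
      inner_diff_right)

lemma scaleR_mat_one_loewner_ge_iff:
  "loewner_ge (b *\<^sub>R mat 1) X \<longleftrightarrow> sym_mat X \<and> (\<forall>x. x \<bullet> (X *v x) \<le> b * (x \<bullet> x))"
  by (simp add: loewner_ge_def psd_mat_def sym_mat_shift_iff matrix_vector_mult_diff_rdistrib
      inner_diff_right)

lemma mem_loewner_interval:
  "X \<in> loewner_interval a b \<longleftrightarrow>
    sym_mat X \<and> (\<forall>x. a * (x \<bullet> x) \<le> x \<bullet> (X *v x) \<and> x \<bullet> (X *v x) \<le> b * (x \<bullet> x))"
  by (auto simp: loewner_interval_def loewner_ge_scaleR_mat_one_iff scaleR_mat_one_loewner_ge_iff)

lemma loewner_interval_bounds_le:
  fixes X :: "real^'n^'n"
  assumes "X \<in> loewner_interval a b" shows "a \<le> b"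
proof -
  let ?x = "axis undefined (1::real) :: real^'n"
  have "\<forall>x. a * (x \<bullet> x) \<le> x \<bullet> (X *v x) \<and> x \<bullet> (X *v x) \<le> b * (x \<bullet> x)"
    using assms by (simp add: mem_loewner_interval)
  then have "a * (?x \<bullet> ?x) \<le> ?x \<bullet> (X *v ?x) \<and> ?x \<bullet> (X *v ?x) \<le> b * (?x \<bullet> ?x)" ..
  moreover have "?x \<bullet> ?x = 1" by (simp add: inner_axis_axis)
  ultimately show ?thesis by simp
qed

lemma loewner_interval_mono:
  assumes "a' \<le> a" "b \<le> b'"
  shows "loewner_interval a b \<subseteq> loewner_interval a' b'"
proof
  fix X :: "real^'n^'n" assume "X \<in> loewner_interval a b"
  moreover have "a' * (x \<bullet> x) \<le> a * (x \<bullet> x)" "b * (x \<bullet> x) \<le> b' * (x \<bullet> x)" for x :: "real^'n"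
    using assms by (simp_all add: mult_right_mono)
  ultimately show "X \<in> loewner_interval a' b'"
    unfolding mem_loewner_interval by (meson order_trans)
qed

lemma scaleR_mat_one_in_loewner_interval: "a \<le> b \<Longrightarrow> a *\<^sub>R mat 1 \<in> loewner_interval a b"
  by (simp add: mem_loewner_interval sym_mat_scaleR sym_mat_mat mult_right_mono)

lemma loewner_interval_imp_psd_mat: "X \<in> loewner_interval a b \<Longrightarrow> 0 \<le> a \<Longrightarrow> psd_mat X"
  unfolding mem_loewner_interval psd_mat_def by (meson order_trans zero_le_mult_iff inner_ge_zero)

lemma loewner_interval_imp_pd_mat: "X \<in> loewner_interval a b \<Longrightarrow> 0 < a \<Longrightarrow> pd_mat X"
  unfolding mem_loewner_interval pd_mat_def by (meson less_le_trans mult_pos_pos inner_gt_zero_iff)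

lemma convex_loewner_interval: "convex (loewner_interval a b)"
proof (rule convexI)
  fix X Y :: "real^'n^'n" and u v :: real
  assume X: "X \<in> loewner_interval a b" and Y: "Y \<in> loewner_interval a b"
    and uv: "0 \<le> u" "0 \<le> v" "u + v = 1"
  have form: "x \<bullet> ((u *\<^sub>R X + v *\<^sub>R Y) *v x) = u * (x \<bullet> (X *v x)) + v * (x \<bullet> (Y *v x))" for x
    by (simp add: matrix_vector_mult_add_rdistrib inner_add_right flip: scaleR_matrix_vector_assoc)
  have "a * (x \<bullet> x) \<le> x \<bullet> ((u *\<^sub>R X + v *\<^sub>R Y) *v x)" for x
  proof -
    have "u * (a * (x \<bullet> x)) \<le> u * (x \<bullet> (X *v x))" "v * (a * (x \<bullet> x)) \<le> v * (x \<bullet> (Y *v x))"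
      using X Y uv(1,2) by (auto simp: mem_loewner_interval intro: mult_left_mono)
    moreover have "u * (a * (x \<bullet> x)) + v * (a * (x \<bullet> x)) = a * (x \<bullet> x)"
      using uv(3) by (simp flip: distrib_right)
    ultimately show ?thesis by (simp add: form)
  qed
  moreover have "x \<bullet> ((u *\<^sub>R X + v *\<^sub>R Y) *v x) \<le> b * (x \<bullet> x)" for x
  proof -
    have "u * (x \<bullet> (X *v x)) \<le> u * (b * (x \<bullet> x))" "v * (x \<bullet> (Y *v x)) \<le> v * (b * (x \<bullet> x))"
      using X Y uv(1,2) by (auto simp: mem_loewner_interval intro: mult_left_mono)
    moreover have "u * (b * (x \<bullet> x)) + v * (b * (x \<bullet> x)) = b * (x \<bullet> x)"
      using uv(3) by (simp flip: distrib_right)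
    ultimately show ?thesis by (simp add: form)
  qed
  moreover have "sym_mat (u *\<^sub>R X + v *\<^sub>R Y)"
    using X Y by (simp add: mem_loewner_interval sym_mat_add sym_mat_scaleR)
  ultimately show "u *\<^sub>R X + v *\<^sub>R Y \<in> loewner_interval a b"
    by (simp add: mem_loewner_interval)
qed

lemma compact_loewner_interval:
  assumes "0 \<le> a" shows "compact (loewner_interval a b :: (real^'n^'n) set)"
proof -
  have "bounded (loewner_interval a b :: (real^'n^'n) set)"
    unfolding bounded_iff
  proof (intro exI ballI)
    fix X :: "real^'n^'n" assume X: "X \<in> loewner_interval a b"
    have "\<bar>x \<bullet> (X *v x)\<bar> \<le> b * (norm x)\<^sup>2" for x
    proof -
      have "a * (x \<bullet> x) \<le> x \<bullet> (X *v x)" "x \<bullet> (X *v x) \<le> b * (x \<bullet> x)"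
        using X by (simp_all add: mem_loewner_interval)
      moreover have "0 \<le> a * (x \<bullet> x)" using assms by simp
      ultimately show ?thesis by (simp add: power2_norm_eq_inner abs_le_iff)
    qed
    with X have "\<bar>X$i$j\<bar> \<le> 2 * b" for i j
      by (intro sym_mat_entry_le_form_bound) (auto simp: mem_loewner_interval)
    then show "norm X \<le> real CARD('n) * real CARD('n) * (2 * b)"
      by (rule norm_matrix_le_entry_bound)
  qed
  moreover have "closed (loewner_interval a b :: (real^'n^'n) set)"
  proof -
    have form: "continuous_on UNIV (\<lambda>X :: real^'n^'n. x \<bullet> (X *v x))" for x
      unfolding matrix_vector_mult_def by (intro continuous_intros)
    have "loewner_interval a b = {X :: real^'n^'n. (\<forall>i j. X$j$i = X$i$j)
        \<and> (\<forall>x. a * (x \<bullet> x) \<le> x \<bullet> (X *v x)) \<and> (\<forall>x. x \<bullet> (X *v x) \<le> b * (x \<bullet> x))}"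
      by (auto simp: mem_loewner_interval sym_mat_iff)
    also have "closed \<dots>"
      by (intro closed_Collect_conj closed_Collect_all closed_Collect_eq closed_Collect_le
          continuous_intros form)
    finally show ?thesis .
  qed
  ultimately show ?thesis by (simp add: compact_eq_bounded_closed)
qed

lemma loewner_interval_affine:
  assumes X: "X \<in> loewner_interval a b" and c: "0 \<le> c"
  shows "c *\<^sub>R X + d *\<^sub>R mat 1 \<in> loewner_interval (c * a + d) (c * b + d)"
proof -
  have form: "x \<bullet> ((c *\<^sub>R X + d *\<^sub>R mat 1) *v x) = c * (x \<bullet> (X *v x)) + d * (x \<bullet> x)" for x
    by (simp add: matrix_vector_mult_add_rdistrib inner_add_right flip: scaleR_matrix_vector_assoc)
  have "c * (a * (x \<bullet> x)) \<le> c * (x \<bullet> (X *v x))" "c * (x \<bullet> (X *v x)) \<le> c * (b * (x \<bullet> x))" for x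
    using X c by (simp_all add: mem_loewner_interval mult_left_mono)
  with X show ?thesis
    unfolding mem_loewner_interval form by (simp add: sym_mat_add sym_mat_scaleR sym_mat_mat algebra_simps)
qed

lemma msqrt_loewner_interval:
  assumes X: "X \<in> loewner_interval a b" and a: "0 \<le> a"
  shows "msqrt X \<in> loewner_interval (sqrt a) (sqrt b)"
proof -
  define S where "S = msqrt X"
  have psdX: "psd_mat X" by (rule loewner_interval_imp_psd_mat[OF X a])
  have S: "psd_mat S" "S ** S = X" "sym_mat S"
    using psdX by (simp_all add: S_def psd_mat_msqrt msqrt_square sym_mat_msqrt)
  have Xlo: "a * (x \<bullet> x) \<le> x \<bullet> (X *v x)" and Xhi: "x \<bullet> (X *v x) \<le> b * (x \<bullet> x)" for x
    using X by (simp_all add: mem_loewner_interval)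
  have upper: "x \<bullet> (S *v x) \<le> sqrt b * (x \<bullet> x)" for x
  proof -
    obtain v where v: "norm v = 1" and ev: "S *v v = (v \<bullet> (S *v v)) *\<^sub>R v"
      and max: "\<And>x. x \<bullet> (S *v x) \<le> (v \<bullet> (S *v v)) * (x \<bullet> x)"
      using sym_mat_max_eigenvector[OF S(3)] by blast
    have "(v \<bullet> (S *v v))\<^sup>2 \<le> b"
      using unit_eigenvalue_square[OF S(3) v ev] Xhi[of v] v by (simp add: S(2) dot_square_norm)
    moreover have "0 \<le> v \<bullet> (S *v v)" using S(1) by (simp add: psd_mat_def)
    ultimately have "v \<bullet> (S *v v) \<le> sqrt b" by (simp add: real_le_rsqrt)
    then show ?thesis using max[of x] by (meson inner_ge_zero mult_right_mono order_trans)
  qed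
  have lower: "sqrt a * (x \<bullet> x) \<le> x \<bullet> (S *v x)" for x
  proof -
    obtain v where v: "norm v = 1" and ev: "(- S) *v v = (v \<bullet> ((- S) *v v)) *\<^sub>R v"
      and max: "\<And>x. x \<bullet> ((- S) *v x) \<le> (v \<bullet> ((- S) *v v)) * (x \<bullet> x)"
      using sym_mat_max_eigenvector[OF sym_mat_uminus[OF S(3)]] by blast
    have ev': "S *v v = (v \<bullet> (S *v v)) *\<^sub>R v"
      using ev by (simp add: matrix_vector_mult_uminus_left)
    have "a \<le> (v \<bullet> (S *v v))\<^sup>2"
      using unit_eigenvalue_square[OF S(3) v ev'] Xlo[of v] v by (simp add: S(2) dot_square_norm)
    then have "sqrt a \<le> \<bar>v \<bullet> (S *v v)\<bar>" using real_sqrt_le_mono by fastforce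
    moreover have "0 \<le> v \<bullet> (S *v v)" using S(1) by (simp add: psd_mat_def)
    ultimately have "sqrt a * (x \<bullet> x) \<le> (v \<bullet> (S *v v)) * (x \<bullet> x)"
      by (simp add: mult_right_mono)
    moreover have "(v \<bullet> (S *v v)) * (x \<bullet> x) \<le> x \<bullet> (S *v x)"
      using max[of x] by (simp add: matrix_vector_mult_uminus_left)
    ultimately show ?thesis by linarith
  qed
  show ?thesis using S(3) upper lower by (simp add: mem_loewner_interval S_def)
qed

lemma loewner_interval_congruence:
  assumes X: "X \<in> loewner_interval a b" "0 \<le> a" and C: "C \<in> loewner_interval \<alpha> K" "0 \<le> \<alpha>"
  shows "msqrt X ** C ** msqrt X \<in> loewner_interval (\<alpha> * a) (K * b)"
proof -
  define R where "R = msqrt X"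
  have psdX: "psd_mat X" by (rule loewner_interval_imp_psd_mat[OF X])
  have symR: "sym_mat R" using psdX by (simp add: R_def sym_mat_msqrt)
  have RR: "(R *v x) \<bullet> (R *v x) = x \<bullet> (X *v x)" for x
    using inner_sym_mat_square[OF symR] psdX by (simp add: R_def msqrt_square)
  have "0 \<le> K" using loewner_interval_bounds_le[OF C(1)] C(2) by linarith
  have "\<alpha> * a * (x \<bullet> x) \<le> x \<bullet> ((R ** C ** R) *v x) \<and> x \<bullet> ((R ** C ** R) *v x) \<le> K * b * (x \<bullet> x)" for x
  proof -
    let ?y = "R *v x"
    have "\<alpha> * (a * (x \<bullet> x)) \<le> \<alpha> * (?y \<bullet> ?y)" "K * (?y \<bullet> ?y) \<le> K * (b * (x \<bullet> x))"
      using X(1) C(2) \<open>0 \<le> K\<close> by (simp_all add: RR mem_loewner_interval mult_left_mono)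
    moreover have "\<alpha> * (?y \<bullet> ?y) \<le> ?y \<bullet> (C *v ?y)" "?y \<bullet> (C *v ?y) \<le> K * (?y \<bullet> ?y)"
      using C(1) by (simp_all add: mem_loewner_interval)
    ultimately show ?thesis by (simp add: inner_sym_mat_congruence[OF symR] mult.assoc)
  qed
  moreover have "sym_mat (R ** C ** R)"
    using C(1) symR by (simp add: mem_loewner_interval sym_mat_congruence)
  ultimately show ?thesis by (simp add: mem_loewner_interval R_def)
qed

section \<open>Invariance of a Loewner interval under the map\<close>

lemma Gmap_eq_affine:
  fixes C :: "nat \<Rightarrow> real^'n^'n"
  assumes "(\<Sum>i\<in>{1..N}. w i) = 1"
  shows "Gmap eps N w C X = (eps / 4) *\<^sub>R
      (\<Sum>i\<in>{1..N}. w i *\<^sub>R msqrt (mat 1 + ((4 / eps)\<^sup>2) *\<^sub>R (msqrt X ** C i ** msqrt X)))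
      + (- (eps / 4)) *\<^sub>R mat 1"
proof -
  define M where "M i = msqrt (mat 1 + ((4 / eps)\<^sup>2) *\<^sub>R (msqrt X ** C i ** msqrt X))" for i
  have "(\<Sum>i\<in>{1..N}. w i *\<^sub>R (- mat 1 + M i))
      = (\<Sum>i\<in>{1..N}. w i *\<^sub>R M i) - (\<Sum>i\<in>{1..N}. w i) *\<^sub>R mat 1"
    by (simp add: scaleR_diff_right sum_subtractf scaleR_sum_left)
  also have "\<dots> = (\<Sum>i\<in>{1..N}. w i *\<^sub>R M i) - mat 1" using assms by simp
  finally show ?thesis
    unfolding Gmap_def M_def[symmetric] by (simp add: scaleR_diff_right)
qed

lemma scaled_sqrt_step_eq:
  assumes "0 < eps" "0 \<le> x"
  shows "eps / 4 * (sqrt (1 + (4 / eps)\<^sup>2 * ((x + eps / 2) * x)) - 1) = x"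
proof -
  have "1 + (4 / eps)\<^sup>2 * ((x + eps / 2) * x) = (1 + 4 * x / eps)\<^sup>2"
    using assms by (simp add: field_simps power2_eq_square)
  then have "sqrt (1 + (4 / eps)\<^sup>2 * ((x + eps / 2) * x)) = 1 + 4 * x / eps"
    using assms by simp
  then show ?thesis using assms by (simp add: field_simps)
qed

lemma scaled_sqrt_step_le:
  assumes "0 < eps" "0 \<le> x" "0 \<le> a" "a \<le> x + eps / 2"
  shows "eps / 4 * (sqrt (1 + (4 / eps)\<^sup>2 * (a * x)) - 1) \<le> x"
proof -
  have "(4 / eps)\<^sup>2 * (a * x) \<le> (4 / eps)\<^sup>2 * ((x + eps / 2) * x)"
    using assms by (intro mult_left_mono mult_right_mono) auto
  then have "sqrt (1 + (4 / eps)\<^sup>2 * (a * x)) \<le> sqrt (1 + (4 / eps)\<^sup>2 * ((x + eps / 2) * x))"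
    by simp
  then have "eps / 4 * (sqrt (1 + (4 / eps)\<^sup>2 * (a * x)) - 1)
      \<le> eps / 4 * (sqrt (1 + (4 / eps)\<^sup>2 * ((x + eps / 2) * x)) - 1)"
    using assms(1) by (intro mult_left_mono) auto
  also have "\<dots> = x" by (rule scaled_sqrt_step_eq[OF assms(1,2)])
  finally show ?thesis .
qed

lemma Gmap_loewner_interval:
  assumes eps: "0 < eps"
    and w: "\<And>i. i \<in> {1..N} \<Longrightarrow> 0 \<le> w i" "(\<Sum>i\<in>{1..N}. w i) = 1"
    and C: "\<And>i. i \<in> {1..N} \<Longrightarrow> C i \<in> loewner_interval \<alpha> K" and \<alpha>: "0 \<le> \<alpha>"
    and X: "X \<in> loewner_interval \<beta> \<gamma>" and \<beta>: "0 \<le> \<beta>"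
  shows "Gmap eps N w C X \<in> loewner_interval
    (eps / 4 * (sqrt (1 + (4 / eps)\<^sup>2 * (\<alpha> * \<beta>)) - 1)) (eps / 4 * (sqrt (1 + (4 / eps)\<^sup>2 * (K * \<gamma>)) - 1))"
proof -
  let ?c = "(4 / eps)\<^sup>2"
  let ?L = "sqrt (1 + ?c * (\<alpha> * \<beta>))" and ?U = "sqrt (1 + ?c * (K * \<gamma>))"
  have "msqrt (mat 1 + ?c *\<^sub>R (msqrt X ** C i ** msqrt X)) \<in> loewner_interval ?L ?U"
    if i: "i \<in> {1..N}" for i
  proof -
    have "?c *\<^sub>R (msqrt X ** C i ** msqrt X) + 1 *\<^sub>R mat 1
        \<in> loewner_interval (?c * (\<alpha> * \<beta>) + 1) (?c * (K * \<gamma>) + 1)"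
      by (intro loewner_interval_affine loewner_interval_congruence X \<beta> C[OF i] \<alpha>) simp
    then show ?thesis
      using \<alpha> \<beta> by (intro msqrt_loewner_interval[of _ "1 + ?c * (\<alpha> * \<beta>)", simplified])
        (simp_all add: add.commute)
  qed
  then have "(\<Sum>i\<in>{1..N}. w i *\<^sub>R msqrt (mat 1 + ?c *\<^sub>R (msqrt X ** C i ** msqrt X)))
      \<in> loewner_interval ?L ?U"
    by (intro convex_sum[OF finite_atLeastAtMost convex_loewner_interval w(2) w(1)])
  from loewner_interval_affine[OF this, of "eps / 4" "- (eps / 4)"] eps show ?thesis
    by (simp add: Gmap_eq_affine[OF w(2)] algebra_simps)
qed

lemma continuous_on_matrix_mult:
  fixes f :: "'a::topological_space \<Rightarrow> real^'n^'m" and g :: "'a \<Rightarrow> real^'k^'n"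
  shows "continuous_on S f \<Longrightarrow> continuous_on S g \<Longrightarrow> continuous_on S (\<lambda>x. f x ** g x)"
  unfolding matrix_matrix_mult_def by (intro continuous_intros)

lemma continuous_on_Gmap:
  assumes C: "\<And>i. i \<in> {1..N} \<Longrightarrow> psd_mat (C i)"
  shows "continuous_on {X. psd_mat X} (Gmap eps N w C)"
proof -
  let ?h = "\<lambda>i X. mat 1 + ((4 / eps)\<^sup>2) *\<^sub>R (msqrt X ** C i ** msqrt X)"
  have "continuous_on {X. psd_mat X} (\<lambda>X. msqrt (?h i X))" if i: "i \<in> {1..N}" for i
  proof (rule continuous_on_compose2[OF continuous_on_msqrt])
    show "continuous_on {X. psd_mat X} (?h i)"
      by (intro continuous_intros continuous_on_matrix_mult continuous_on_msqrt)
    show "?h i ` {X. psd_mat X} \<subseteq> {A. psd_mat A}"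
      using C[OF i] by (auto intro!: psd_mat_mat_one_plus psd_mat_congruence sym_mat_msqrt)
  qed
  then show ?thesis
    unfolding Gmap_def by (intro continuous_intros) auto
qed

lemma quadratic_form_le_onorm:
  fixes M :: "real^'n^'n"
  shows "x \<bullet> (M *v x) \<le> onorm ((*v) M) * (x \<bullet> x)"
  using abs_le_D1[OF quadratic_form_abs_le_onorm[of x M]] by (simp add: power2_norm_eq_inner)

lemma loewner_ge_imp_loewner_interval:
  assumes "loewner_ge C (\<alpha> *\<^sub>R mat 1)" "onorm ((*v) C) \<le> K"
  shows "C \<in> loewner_interval \<alpha> K"
proof -
  have "x \<bullet> (C *v x) \<le> K * (x \<bullet> x)" for x
    using quadratic_form_le_onorm[of x C] mult_right_mono[OF assms(2) inner_ge_zero[of x]]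
    by linarith
  with assms(1) show ?thesis by (simp add: mem_loewner_interval loewner_ge_scaleR_mat_one_iff)
qed

lemma Gmap_loewner_interval_invariant:
  assumes eps: "0 < eps"
    and w_pos: "\<And>i. i \<in> {1..N} \<Longrightarrow> 0 < w i" and w_sum: "(\<Sum>i\<in>{1..N}. w i) = 1"
    and C: "\<And>i. i \<in> {1..N} \<Longrightarrow> C i \<in> loewner_interval \<alpha> K"
    and "\<alpha> \<le> K" and eps_less: "eps < 2 * \<alpha>"
    and X: "X \<in> loewner_interval (\<alpha> - eps / 2) (K + \<alpha> - eps / 2)"
  shows "Gmap eps N w C X \<in> loewner_interval (\<alpha> - eps / 2) (K + \<alpha> - eps / 2)"
proof -
  define \<beta> where "\<beta> = \<alpha> - eps / 2"
  have "0 < \<beta>" using eps_less by (simp add: \<beta>_def)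
  have interval: "loewner_interval (\<alpha> - eps / 2) (K + \<alpha> - eps / 2) = loewner_interval \<beta> (K + \<beta>)"
    by (simp add: \<beta>_def algebra_simps)
  have "Gmap eps N w C X \<in> loewner_interval (eps / 4 * (sqrt (1 + (4 / eps)\<^sup>2 * (\<alpha> * \<beta>)) - 1))
      (eps / 4 * (sqrt (1 + (4 / eps)\<^sup>2 * (K * (K + \<beta>))) - 1))"
    using X \<open>0 < \<beta>\<close> eps_less eps unfolding interval
    by (intro Gmap_loewner_interval[OF eps _ w_sum C]) (auto intro: less_imp_le[OF w_pos] simp: \<beta>_def)
  moreover have "eps / 4 * (sqrt (1 + (4 / eps)\<^sup>2 * (\<alpha> * \<beta>)) - 1) = \<beta>"
    using scaled_sqrt_step_eq[OF eps, of \<beta>] \<open>0 < \<beta>\<close> by (simp add: \<beta>_def)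
  moreover have "eps / 4 * (sqrt (1 + (4 / eps)\<^sup>2 * (K * (K + \<beta>))) - 1) \<le> K + \<beta>"
    using \<open>0 < \<beta>\<close> \<open>\<alpha> \<le> K\<close> eps_less eps by (intro scaled_sqrt_step_le) auto
  ultimately show ?thesis
    unfolding interval using loewner_interval_mono[OF order_refl] by (metis subsetD)
qed

lemma Gmap_has_pd_fixed_point:
  fixes C :: "nat \<Rightarrow> real^'n^'n"
  assumes eps: "0 < eps"
    and w_pos: "\<And>i. i \<in> {1..N} \<Longrightarrow> 0 < w i" and w_sum: "(\<Sum>i\<in>{1..N}. w i) = 1"
    and C_ge: "\<And>i. i \<in> {1..N} \<Longrightarrow> loewner_ge (C i) (\<alpha> *\<^sub>R mat 1)" and eps_less: "eps < 2 * \<alpha>"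
  shows "\<exists>X. pd_mat X \<and> Gmap eps N w C X = X"
proof -
  define K where "K = (\<Sum>i\<in>{1..N}. onorm ((*v) (C i)))"
  have C: "C i \<in> loewner_interval \<alpha> K" if "i \<in> {1..N}" for i
    unfolding K_def using that
    by (intro loewner_ge_imp_loewner_interval C_ge member_le_sum onorm_pos_le
        matrix_vector_mul_bounded_linear) auto
  have "1 \<in> {1..N}" using w_sum by (cases N) auto
  then have "\<alpha> \<le> K" using C loewner_interval_bounds_le by blast
  define S where "S = (loewner_interval (\<alpha> - eps / 2) (K + \<alpha> - eps / 2) :: (real^'n^'n) set)"
  have "0 < \<alpha> - eps / 2" using eps_less by simp
  then have psd_S: "S \<subseteq> {X. psd_mat X}"
    using loewner_interval_imp_psd_mat[of _ "\<alpha> - eps / 2"] by (auto simp: S_def)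
  have psd_C: "psd_mat (C i)" if "i \<in> {1..N}" for i
    using C[OF that] \<open>0 < \<alpha> - eps / 2\<close> eps by (intro loewner_interval_imp_psd_mat) auto
  have "compact S" using \<open>0 < \<alpha> - eps / 2\<close> by (simp add: S_def compact_loewner_interval)
  moreover have "convex S" by (simp add: S_def convex_loewner_interval)
  moreover have "S \<noteq> {}"
    using scaleR_mat_one_in_loewner_interval[of "\<alpha> - eps / 2" "K + \<alpha> - eps / 2"]
      \<open>\<alpha> \<le> K\<close> \<open>0 < \<alpha> - eps / 2\<close> eps by (auto simp: S_def)
  moreover have "continuous_on S (Gmap eps N w C)"
    by (rule continuous_on_subset[OF continuous_on_Gmap[OF psd_C] psd_S])
  moreover have "Gmap eps N w C \<in> S \<rightarrow> S"
    using Gmap_loewner_interval_invariant[OF eps w_pos w_sum C \<open>\<alpha> \<le> K\<close> eps_less]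
    by (auto simp: S_def)
  ultimately obtain X where "X \<in> S" "Gmap eps N w C X = X"
    using brouwer by blast
  moreover from \<open>X \<in> S\<close> have "pd_mat X"
    using \<open>0 < \<alpha> - eps / 2\<close> by (intro loewner_interval_imp_pd_mat) (auto simp: S_def)
  ultimately show ?thesis by blast
qed

section \<open>Rank-one fixed points\<close>

definition sqrt_rate :: "real \<Rightarrow> real \<Rightarrow> real \<Rightarrow> real" where
  "sqrt_rate eps a x = (4 * a / eps) / (1 + sqrt (1 + (4 / eps)\<^sup>2 * x * a))"

lemma sqrt_rate_factor:
  assumes "0 < eps" "0 \<le> x" "0 \<le> a"
  shows "eps / 4 * (- 1 + sqrt (1 + (4 / eps)\<^sup>2 * x * a)) = x * sqrt_rate eps a x"
proof -
  let ?s = "(4 / eps)\<^sup>2 * x * a"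
  let ?D = "1 + sqrt (1 + ?s)"
  have "0 \<le> ?s" using assms by simp
  then have "(sqrt (1 + ?s) - 1) * ?D = ?s" by (simp add: algebra_simps)
  moreover have "0 < ?D" using \<open>0 \<le> ?s\<close> by (simp add: add_pos_nonneg)
  ultimately have "- 1 + sqrt (1 + ?s) = ?s / ?D" by (simp add: eq_divide_eq)
  moreover have "eps / 4 * ?s = x * (4 * a / eps)"
    using assms(1) by (simp add: power2_eq_square field_simps)
  ultimately show ?thesis by (simp add: sqrt_rate_def)
qed

lemma sqrt_rate_zero: "sqrt_rate eps a 0 = 2 * a / eps"
  by (simp add: sqrt_rate_def)

lemma sqrt_rate_antimono:
  assumes "0 < eps" "0 \<le> a" "0 \<le> x" "x \<le> y"
  shows "sqrt_rate eps a y \<le> sqrt_rate eps a x"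
  unfolding sqrt_rate_def
proof (rule divide_left_mono)
  have "(4 / eps)\<^sup>2 * x * a \<le> (4 / eps)\<^sup>2 * y * a"
    using assms by (intro mult_right_mono mult_left_mono) auto
  then show "1 + sqrt (1 + (4 / eps)\<^sup>2 * x * a) \<le> 1 + sqrt (1 + (4 / eps)\<^sup>2 * y * a)" by simp
qed (use assms in \<open>auto intro!: mult_pos_pos add_pos_nonneg\<close>)

lemma sqrt_rate_strict_antimono:
  assumes "0 < eps" "0 < a" "0 \<le> x" "x < y"
  shows "sqrt_rate eps a y < sqrt_rate eps a x"
  unfolding sqrt_rate_def
proof (rule divide_strict_left_mono)
  have "(4 / eps)\<^sup>2 * x * a < (4 / eps)\<^sup>2 * y * a"
    using assms by (intro mult_strict_right_mono mult_strict_left_mono) auto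
  then show "1 + sqrt (1 + (4 / eps)\<^sup>2 * x * a) < 1 + sqrt (1 + (4 / eps)\<^sup>2 * y * a)" by simp
qed (use assms in \<open>auto intro!: mult_pos_pos add_pos_nonneg\<close>)

lemma sqrt_rate_le_one:
  assumes "0 < eps" "0 \<le> a" "a \<le> x"
  shows "sqrt_rate eps a x \<le> 1"
proof -
  have "(4 * a / eps)\<^sup>2 = (4 / eps)\<^sup>2 * a * a" by (simp add: power2_eq_square)
  also have "\<dots> \<le> (4 / eps)\<^sup>2 * x * a" using assms by (intro mult_right_mono mult_left_mono) auto
  also have "\<dots> \<le> 1 + (4 / eps)\<^sup>2 * x * a" by simp
  finally have "4 * a / eps \<le> sqrt (1 + (4 / eps)\<^sup>2 * x * a)" by (rule real_le_rsqrt)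
  then have "4 * a / eps \<le> 1 + sqrt (1 + (4 / eps)\<^sup>2 * x * a)" by simp
  moreover have D: "0 < 1 + sqrt (1 + (4 / eps)\<^sup>2 * x * a)" using assms by (simp add: add_pos_nonneg)
  ultimately show ?thesis unfolding sqrt_rate_def divide_le_eq_1_pos[OF D] by simp
qed

lemma continuous_on_sqrt_rate:
  assumes "0 \<le> a"
  shows "continuous_on {0..} (sqrt_rate eps a)"
proof -
  have "1 + sqrt (1 + (4 / eps)\<^sup>2 * x * a) \<noteq> 0" if "x \<in> {0..}" for x
  proof -
    have "0 \<le> sqrt (1 + (4 / eps)\<^sup>2 * x * a)" using that assms by simp
    then show ?thesis by linarith
  qed
  then show ?thesis unfolding sqrt_rate_def by (intro continuous_intros) auto
qed

lemma weighted_sqrt_step_eq: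
  assumes eps: "0 < eps" and "0 \<le> x" and a: "\<And>i. i \<in> I \<Longrightarrow> 0 \<le> a i"
  shows "eps / 4 * (\<Sum>i\<in>I. w i * (- 1 + sqrt (1 + (4 / eps)\<^sup>2 * x * a i)))
    = x * (\<Sum>i\<in>I. w i * sqrt_rate eps (a i) x)"
proof -
  have "eps / 4 * (\<Sum>i\<in>I. w i * (- 1 + sqrt (1 + (4 / eps)\<^sup>2 * x * a i)))
      = (\<Sum>i\<in>I. w i * (eps / 4 * (- 1 + sqrt (1 + (4 / eps)\<^sup>2 * x * a i))))"
    by (simp add: sum_distrib_left mult.left_commute)
  also have "\<dots> = (\<Sum>i\<in>I. w i * (x * sqrt_rate eps (a i) x))"
    by (intro sum.cong refl arg_cong2[where f = times] sqrt_rate_factor) (use assms in auto)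
  also have "\<dots> = x * (\<Sum>i\<in>I. w i * sqrt_rate eps (a i) x)"
    by (simp add: sum_distrib_left mult.left_commute)
  finally show ?thesis .
qed

lemma weighted_sqrt_rate_strict_antimono:
  assumes eps: "0 < eps" and "finite I" and w: "\<And>i. i \<in> I \<Longrightarrow> 0 < w i"
    and a: "\<And>i. i \<in> I \<Longrightarrow> 0 \<le> a i" and j: "j \<in> I" "0 < a j" and xy: "0 \<le> x" "x < y"
  shows "(\<Sum>i\<in>I. w i * sqrt_rate eps (a i) y) < (\<Sum>i\<in>I. w i * sqrt_rate eps (a i) x)"
proof (rule sum_strict_mono_ex1[OF \<open>finite I\<close>])
  show "\<forall>i\<in>I. w i * sqrt_rate eps (a i) y \<le> w i * sqrt_rate eps (a i) x"
    using xy eps a by (auto intro!: mult_left_mono sqrt_rate_antimono simp: less_imp_le[OF w])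
  show "\<exists>i\<in>I. w i * sqrt_rate eps (a i) y < w i * sqrt_rate eps (a i) x"
  proof (rule bexI[OF _ j(1)])
    show "w j * sqrt_rate eps (a j) y < w j * sqrt_rate eps (a j) x"
      using xy eps j w[OF j(1)] by (intro mult_strict_left_mono sqrt_rate_strict_antimono)
  qed
qed

lemma unique_crossing_of_decreasing:
  fixes q :: "real \<Rightarrow> real"
  assumes cont: "continuous_on {0..} q" and dec: "\<And>x y. 0 \<le> x \<Longrightarrow> x < y \<Longrightarrow> q y < q x"
    and "1 < q 0" "0 \<le> B" "q B \<le> 1"
  shows "\<exists>!x. 0 < x \<and> q x = 1"
proof -
  obtain x where x: "0 \<le> x" "q x = 1"
    using IVT2'[of q B 1 0] continuous_on_subset[OF cont] assms(3-5) by force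
  with \<open>1 < q 0\<close> have "0 < x" by (cases "x = 0") auto
  show ?thesis
  proof (rule ex1I[of _ x])
    fix y assume y: "0 < y \<and> q y = 1"
    show "y = x"
      using dec[of x y] dec[of y x] x y by (cases rule: linorder_cases[of x y]) auto
  qed (use \<open>0 < x\<close> x in auto)
qed

lemma unique_positive_fixed_point:
  fixes a w :: "nat \<Rightarrow> real"
  assumes eps: "0 < eps" and w_pos: "\<And>i. i \<in> {1..N} \<Longrightarrow> 0 < w i"
    and w_sum: "(\<Sum>i\<in>{1..N}. w i) = 1" and a: "\<And>i. i \<in> {1..N} \<Longrightarrow> 0 \<le> a i"
    and big: "eps < 2 * (\<Sum>i\<in>{1..N}. w i * a i)"
  shows "\<exists>!x. 0 < x \<and> x = eps / 4 * (\<Sum>i\<in>{1..N}. w i * (- 1 + sqrt (1 + (4 / eps)\<^sup>2 * x * a i)))"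
proof -
  define q where "q x = (\<Sum>i\<in>{1..N}. w i * sqrt_rate eps (a i) x)" for x
  obtain j where j: "j \<in> {1..N}" "0 < a j"
  proof -
    have "\<not> (\<forall>i\<in>{1..N}. a i = 0)"
    proof
      assume "\<forall>i\<in>{1..N}. a i = 0"
      then have "(\<Sum>i\<in>{1..N}. w i * a i) = 0" by simp
      then show False using big eps by simp
    qed
    then show thesis using that a by force
  qed
  define B where "B = (\<Sum>i\<in>{1..N}. a i)"
  have "q B \<le> (\<Sum>i\<in>{1..N}. w i * 1)"
    unfolding q_def using eps a w_pos
    by (intro sum_mono mult_left_mono sqrt_rate_le_one)
      (auto simp: B_def intro: member_le_sum less_imp_le)
  then have "q B \<le> 1" using w_sum by simp
  moreover have "1 < q 0"
    using big eps by (simp add: q_def sqrt_rate_zero sum_divide_distrib[symmetric] field_simps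
        sum_distrib_left mult_ac)
  moreover have "0 \<le> B" unfolding B_def using a by (intro sum_nonneg) auto
  moreover have "continuous_on {0..} q"
    unfolding q_def using a by (intro continuous_intros continuous_on_sqrt_rate) auto
  moreover have "q y < q x" if "0 \<le> x" "x < y" for x y
    unfolding q_def using eps w_pos a j that by (intro weighted_sqrt_rate_strict_antimono) auto
  ultimately have "\<exists>!x. 0 < x \<and> q x = 1" by (intro unique_crossing_of_decreasing)
  moreover have "0 < x \<and> x = eps / 4 * (\<Sum>i\<in>{1..N}. w i * (- 1 + sqrt (1 + (4 / eps)\<^sup>2 * x * a i)))
      \<longleftrightarrow> 0 < x \<and> q x = 1" for x
    using weighted_sqrt_step_eq[where I = "{1..N}" and a = a and w = w and x = x, OF eps _ a]
    by (auto simp: q_def)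
  ultimately show ?thesis by simp
qed

lemma outer_congruence: "outer u u ** C ** outer u u = (u \<bullet> (C *v u)) *\<^sub>R outer u u"
  by (simp add: matrix_eq outer_matrix_vector_mult matrix_vector_mult_scaleR mult.commute
      flip: matrix_vector_mul_assoc scaleR_matrix_vector_assoc)

lemma scaleR_congruence:
  fixes R C :: "real^'n^'n"
  shows "(c *\<^sub>R R) ** C ** (c *\<^sub>R R) = (c * c) *\<^sub>R (R ** C ** R)"
  by (simp only: matrix_scalar_ac scalar_matrix_assoc[symmetric] scaleR_scaleR matrix_mul_assoc)

lemma msqrt_scaleR_outer:
  assumes "norm u = 1" "0 \<le> t"
  shows "msqrt (t *\<^sub>R outer u u) = sqrt t *\<^sub>R outer u u"
proof (rule msqrt_unique)
  show "psd_mat (sqrt t *\<^sub>R outer u u)"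
    using assms(2) by (simp add: psd_mat_scaleR psd_mat_outer)
  show "sqrt t *\<^sub>R outer u u ** sqrt t *\<^sub>R outer u u = t *\<^sub>R outer u u"
    using assms by (simp add: matrix_eq outer_matrix_vector_mult matrix_vector_mult_scaleR
        dot_square_norm flip: matrix_vector_mul_assoc scaleR_matrix_vector_assoc)
qed

lemma msqrt_mat_one_plus_outer:
  assumes "norm u = 1" "0 \<le> k"
  shows "msqrt (mat 1 + k *\<^sub>R outer u u) = mat 1 + (sqrt (1 + k) - 1) *\<^sub>R outer u u"
proof (rule msqrt_unique)
  define d where "d = sqrt (1 + k) - 1"
  have "0 \<le> d" using assms by (simp add: d_def)
  have "2 * d + d * d = k" using assms by (simp add: d_def algebra_simps)
  show "psd_mat (mat 1 + (sqrt (1 + k) - 1) *\<^sub>R outer u u)"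
    using \<open>0 \<le> d\<close> by (simp add: d_def[symmetric] psd_mat_mat_one_plus psd_mat_outer)
  have uu: "u \<bullet> u = 1" using assms(1) by (simp add: dot_square_norm)
  have apply_I_dP: "(mat 1 + d *\<^sub>R outer u u) *v y = y + (d * (u \<bullet> y)) *\<^sub>R u" for d y
    by (simp add: matrix_vector_mult_add_rdistrib outer_matrix_vector_mult flip: scaleR_matrix_vector_assoc)
  have "(mat 1 + d *\<^sub>R outer u u) *v ((mat 1 + d *\<^sub>R outer u u) *v x) = (mat 1 + k *\<^sub>R outer u u) *v x" for x
  proof -
    have "d * (u \<bullet> x) + d * (u \<bullet> x + d * (u \<bullet> x)) = k * (u \<bullet> x)"
      using \<open>2 * d + d * d = k\<close> by (simp add: algebra_simps flip: \<open>2 * d + d * d = k\<close>)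
    then show ?thesis
      by (simp add: apply_I_dP inner_add_right uu add.assoc flip: scaleR_add_left)
  qed
  then show "(mat 1 + (sqrt (1 + k) - 1) *\<^sub>R outer u u) ** (mat 1 + (sqrt (1 + k) - 1) *\<^sub>R outer u u)
      = mat 1 + k *\<^sub>R outer u u"
    by (simp add: d_def[symmetric] matrix_eq flip: matrix_vector_mul_assoc)
qed

lemma Gmap_scaleR_outer:
  assumes u: "norm u = 1" and t: "0 \<le> t" and C: "\<And>i. i \<in> {1..N} \<Longrightarrow> psd_mat (C i)"
  shows "Gmap eps N w C (t *\<^sub>R outer u u) = gscal eps N w C u t *\<^sub>R outer u u"
proof -
  let ?c = "(4 / eps)\<^sup>2"
  have "w i *\<^sub>R (- mat 1 + msqrt (mat 1 + ?c *\<^sub>R (msqrt (t *\<^sub>R outer u u) ** C i ** msqrt (t *\<^sub>R outer u u))))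
      = (w i * (- 1 + sqrt (1 + ?c * t * (u \<bullet> (C i *v u))))) *\<^sub>R outer u u"
    if i: "i \<in> {1..N}" for i
  proof -
    have "0 \<le> u \<bullet> (C i *v u)" using C[OF i] by (simp add: psd_mat_def)
    then have ms: "msqrt (mat 1 + ?c *\<^sub>R (msqrt (t *\<^sub>R outer u u) ** C i ** msqrt (t *\<^sub>R outer u u)))
        = mat 1 + (sqrt (1 + ?c * t * (u \<bullet> (C i *v u))) - 1) *\<^sub>R outer u u"
      using msqrt_mat_one_plus_outer[OF u, of "?c * t * (u \<bullet> (C i *v u))"] t
      by (simp add: msqrt_scaleR_outer[OF u t] scaleR_congruence outer_congruence mult.assoc)
    show ?thesis unfolding ms by (simp add: algebra_simps)
  qed
  then show ?thesis
    by (simp add: Gmap_def gscal_def flip: scaleR_sum_left)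
qed

theorem mainTheorem18:
  fixes eps :: real and N :: nat and w :: "nat \<Rightarrow> real"
    and C :: "nat \<Rightarrow> real^'n^'n"
  assumes eps_pos: "0 < eps"
    and w_pos: "\<And>i. i \<in> {1..N} \<Longrightarrow> 0 < w i"
    and w_sum: "(\<Sum>i\<in>{1..N}. w i) = 1"
    and C_psd: "\<And>i. i \<in> {1..N} \<Longrightarrow> psd_mat (C i)"
  shows "((\<exists>\<alpha>>0. (\<forall>i\<in>{1..N}. loewner_ge (C i) (\<alpha> *\<^sub>R mat 1)) \<and> eps < 2 * \<alpha>)
            \<longrightarrow> (\<exists>X. pd_mat X \<and> Gmap eps N w C X = X))
       \<and> (\<forall>u :: real^'n. norm u = 1 \<and> eps < 2 * (\<Sum>i\<in>{1..N}. w i * (u \<bullet> (C i *v u)))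
            \<longrightarrow> (\<exists>!x. 0 < x \<and> x = gscal eps N w C u x)
              \<and> (let xu = (THE x. 0 < x \<and> x = gscal eps N w C u x)
                 in Gmap eps N w C (xu *\<^sub>R outer u u) = xu *\<^sub>R outer u u))"
proof (intro conjI impI allI)
  assume "\<exists>\<alpha>>0. (\<forall>i\<in>{1..N}. loewner_ge (C i) (\<alpha> *\<^sub>R mat 1)) \<and> eps < 2 * \<alpha>"
  then show "\<exists>X. pd_mat X \<and> Gmap eps N w C X = X"
    using Gmap_has_pd_fixed_point[OF eps_pos w_pos w_sum] by blast
next
  fix u :: "real^'n"
  assume u: "norm u = 1 \<and> eps < 2 * (\<Sum>i\<in>{1..N}. w i * (u \<bullet> (C i *v u)))"
  show "\<exists>!x. 0 < x \<and> x = gscal eps N w C u x"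
    unfolding gscal_def using u C_psd
    by (intro unique_positive_fixed_point[OF eps_pos w_pos w_sum]) (auto simp: psd_mat_def)
  define xu where "xu = (THE x. 0 < x \<and> x = gscal eps N w C u x)"
  with theI'[OF \<open>\<exists>!x. 0 < x \<and> x = gscal eps N w C u x\<close>]
  have xu: "0 < xu" "gscal eps N w C u xu = xu" by auto
  have "Gmap eps N w C (xu *\<^sub>R outer u u) = gscal eps N w C u xu *\<^sub>R outer u u"
    using u xu(1) C_psd by (intro Gmap_scaleR_outer) auto
  then show "let xu = (THE x. 0 < x \<and> x = gscal eps N w C u x)
      in Gmap eps N w C (xu *\<^sub>R outer u u) = xu *\<^sub>R outer u u"
    by (simp add: Let_def xu_def[symmetric] xu(2))
qed

end
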